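(* For every integer $d\ge 1$, the $d$-dimensional hypercube $Q_d$ is $\mathbb{Z}_{2^d}$-distance antimagic if and only if $d$ is odd.
   Context: $Q_d$ is the graph whose vertices are the binary strings of length $d$, two being adjacent iff they differ in exactly one position. $\mathbb{Z}_m$ is the cyclic group of integers modulo $m$. For a graph $G$ with $n$ vertices and an Abelian group $A$ of order $n$ (written additively), and a bijection $f:V(G)\to A$, the weight of $x$ is $w_f(x)=\sum_{y\in N(x)} f(y)$ computed in $A$ ($N(x)$ the open neighbourhood). $f$ is an $A$-distance antimagic labelling if all weights are pairwise distinct; $G$ is $A$-distance antimagic if it admits such a labelling. *)

theory Defs
  imports Main
begin

definition hypercube_vertices :: "nat \<Rightarrow> bool list set" where
  "hypercube_vertices d = {xs. length xs = d}"

definition hypercube_adj :: "bool list \<Rightarrow> bool list \<Rightarrow> bool" where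
  "hypercube_adj xs ys \<longleftrightarrow> length xs = length ys \<and>
     card {i. i < length xs \<and> xs ! i \<noteq> ys ! i} = 1"

definition nbhd :: "'a set \<Rightarrow> ('a \<Rightarrow> 'a \<Rightarrow> bool) \<Rightarrow> 'a \<Rightarrow> 'a set" where
  "nbhd V adj x = {y \<in> V. adj x y}"

(* Z_m is represented by the residues {0..<m}; addition is taken mod m.
   Weight of x under labelling f, computed in Z_m. *)
definition Zm_weight :: "nat \<Rightarrow> 'a set \<Rightarrow> ('a \<Rightarrow> 'a \<Rightarrow> bool) \<Rightarrow> ('a \<Rightarrow> nat) \<Rightarrow> 'a \<Rightarrow> nat" where
  "Zm_weight m V adj f x = (\<Sum>y\<in>nbhd V adj x. f y) mod m"

definition Zm_distance_antimagic_labelling ::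
  "nat \<Rightarrow> 'a set \<Rightarrow> ('a \<Rightarrow> 'a \<Rightarrow> bool) \<Rightarrow> ('a \<Rightarrow> nat) \<Rightarrow> bool" where
  "Zm_distance_antimagic_labelling m V adj f \<longleftrightarrow>
     bij_betw f V {0..<m} \<and> inj_on (Zm_weight m V adj f) V"

definition Zm_distance_antimagic :: "nat \<Rightarrow> 'a set \<Rightarrow> ('a \<Rightarrow> 'a \<Rightarrow> bool) \<Rightarrow> bool" where
  "Zm_distance_antimagic m V adj \<longleftrightarrow> (\<exists>f. Zm_distance_antimagic_labelling m V adj f)"

end

theory Submission imports Defs begin

(* Proof idea.  Write m = 2^d.  The hypercube Q_d is d-regular, and the
   neighbours of a string xs are the d strings obtained by flipping one bit.

   Even d (obstruction).  For any r-regular graph on m vertices and any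
   antimagic labelling f, the weights form a bijection onto Z_m, so
   sum_x w(x) = 0 + 1 + ... + (m-1) (mod m); double counting gives
   sum_x w(x) = r * sum_x f(x) = r * (0 + ... + (m-1)).  When r and m are
   both even the right-hand side is 0 mod m while m(m-1)/2 is not.

   Odd d (construction).  Label each string by the number it denotes in
   binary.  Flipping bit i changes the value by +-2^i, which yields
   w(xs) = (d-2) * val(xs) + 2^d - 1.  Since d-2 is odd, hence invertible
   modulo 2^d, such an affine weight function is injective. *)

lemma double_sum_residues: "2 * (\<Sum>k\<in>{0..<m}. k) = m * (m - 1::nat)"
proof (induction m)
  case 0 then show ?case by simp
next
  case (Suc m) then show ?case by (cases m) (simp_all add: algebra_simps)
qed

(* In an antimagic labelling the weights, being m distinct residues on m
   vertices, form a bijection onto Z_m as well. *)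
lemma antimagic_weights_bij:
  assumes "Zm_distance_antimagic_labelling m V adj f"
  shows "bij_betw (Zm_weight m V adj f) V {0..<m}"
proof -
  have bij: "bij_betw f V {0..<m}" and inj: "inj_on (Zm_weight m V adj f) V"
    using assms by (simp_all add: Zm_distance_antimagic_labelling_def)
  have "card V = m" using bij_betw_same_card[OF bij] by simp
  moreover have "Zm_weight m V adj f ` V \<subseteq> {0..<m}"
  proof
    fix w assume "w \<in> Zm_weight m V adj f ` V"
    then obtain x where "x \<in> V" "w = Zm_weight m V adj f x" by blast
    moreover have "f x < m" using bij \<open>x \<in> V\<close> by (auto simp: bij_betw_def)
    ultimately show "w \<in> {0..<m}" by (simp add: Zm_weight_def)
  qed
  ultimately have "Zm_weight m V adj f ` V = {0..<m}"
    using card_image[OF inj] by (intro card_subset_eq) auto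
  then show ?thesis using inj by (simp add: bij_betw_def)
qed

(* Double counting in an r-regular graph: every label is counted once for
   each of its r neighbours. *)
lemma sum_weights_regular:
  assumes fin: "finite V"
    and sym: "\<And>x y. adj x y = adj y x"
    and reg: "\<And>x. x \<in> V \<Longrightarrow> card (nbhd V adj x) = r"
  shows "(\<Sum>x\<in>V. \<Sum>y\<in>nbhd V adj x. f y) = r * (\<Sum>y\<in>V. f y)"
proof -
  have "(\<Sum>x\<in>V. \<Sum>y\<in>nbhd V adj x. f y) = (\<Sum>y\<in>V. \<Sum>x\<in>{x. x \<in> V \<and> adj x y}. f y)"
    unfolding nbhd_def by (rule sum.swap_restrict[OF fin fin])
  also have "\<dots> = (\<Sum>y\<in>V. r * f y)"
    using reg by (intro sum.cong) (simp_all add: nbhd_def sym)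
  finally show ?thesis by (simp add: sum_distrib_left)
qed

theorem even_regular_not_antimagic:
  assumes sym: "\<And>x y. adj x y = adj y x"
    and reg: "\<And>x. x \<in> V \<Longrightarrow> card (nbhd V adj x) = r"
    and "even r" "even m" "m > 0"
  shows "\<not> Zm_distance_antimagic m V adj"
proof
  assume "Zm_distance_antimagic m V adj"
  then obtain f where lab: "Zm_distance_antimagic_labelling m V adj f"
    unfolding Zm_distance_antimagic_def by blast
  define T where "T = (\<Sum>k\<in>{0..<m}. k)"
  have bij: "bij_betw f V {0..<m}"
    using lab by (simp add: Zm_distance_antimagic_labelling_def)
  have fin: "finite V" using bij_betw_finite[OF bij] by simp
  have sum_labels: "(\<Sum>x\<in>V. f x) = T"
    unfolding T_def using bij by (rule sum.reindex_bij_betw)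
  have sum_weights: "(\<Sum>x\<in>V. Zm_weight m V adj f x) = T"
    unfolding T_def using antimagic_weights_bij[OF lab] by (rule sum.reindex_bij_betw)
  obtain k where k: "r = 2 * k" using \<open>even r\<close> by blast
  have "T mod m = (\<Sum>x\<in>V. \<Sum>y\<in>nbhd V adj x. f y) mod m"
    unfolding sum_weights[symmetric] Zm_weight_def by (rule mod_sum_eq)
  also have "\<dots> = (k * (2 * T)) mod m"
    using sum_weights_regular[OF fin sym reg] sum_labels k by (simp add: ac_simps)
  also have "\<dots> = 0"
    unfolding T_def double_sum_residues by simp
  finally have "2 * m dvd 2 * T" by (simp add: mod_eq_0_iff_dvd)
  then have "2 * m dvd m * (m - 1)" unfolding T_def double_sum_residues .
  then have "even (m - 1)" using \<open>m > 0\<close> by (simp add: mult.commute)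
  then show False using \<open>even m\<close> \<open>m > 0\<close> by presburger
qed

theorem affine_weights_antimagic:
  fixes a c :: int
  assumes bij: "bij_betw f V {0..<m}"
    and unit: "coprime a (int m)"
    and affine: "\<And>x. x \<in> V \<Longrightarrow> int (\<Sum>y\<in>nbhd V adj x. f y) = a * int (f x) + c"
  shows "Zm_distance_antimagic_labelling m V adj f"
  unfolding Zm_distance_antimagic_labelling_def
proof (intro conjI bij inj_onI)
  fix x y assume x: "x \<in> V" and y: "y \<in> V"
    and eq: "Zm_weight m V adj f x = Zm_weight m V adj f y"
  have "int (\<Sum>z\<in>nbhd V adj x. f z) mod int m = int (\<Sum>z\<in>nbhd V adj y. f z) mod int m"
    using eq unfolding Zm_weight_def by (metis of_nat_mod)
  then have "int m dvd int (\<Sum>z\<in>nbhd V adj x. f z) - int (\<Sum>z\<in>nbhd V adj y. f z)"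
    by (simp only: mod_eq_dvd_iff)
  then have "int m dvd a * (int (f x) - int (f y))"
    using affine[OF x] affine[OF y] by (simp add: algebra_simps)
  then have dvd: "int m dvd int (f x) - int (f y)"
    using unit by (simp add: coprime_dvd_mult_right_iff coprime_commute)
  have "f x < m" "f y < m" using bij x y by (auto simp: bij_betw_def)
  then have "\<bar>int (f x) - int (f y)\<bar> < int m" by linarith
  then have "f x = f y" using dvd_imp_le_int[OF _ dvd] by fastforce
  then show "x = y" using bij x y by (auto simp: bij_betw_def inj_on_def)
qed

definition flip :: "bool list \<Rightarrow> nat \<Rightarrow> bool list" where
  "flip xs i = xs[i := \<not> xs ! i]"

lemma length_flip[simp]: "length (flip xs i) = length xs"
  by (simp add: flip_def)

lemma nth_flip: "i < length xs \<Longrightarrow> flip xs i ! j = (if j = i then \<not> xs ! i else xs ! j)"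
  by (simp add: flip_def)

lemma inj_flip: "inj_on (flip xs) {..<length xs}"
  by (rule inj_onI) (metis lessThan_iff nth_flip)

lemma differs_exactly_at_iff:
  assumes "length ys = length xs" "i < length xs"
  shows "{j. j < length xs \<and> xs ! j \<noteq> ys ! j} = {i} \<longleftrightarrow> ys = flip xs i"
proof
  assume diff: "{j. j < length xs \<and> xs ! j \<noteq> ys ! j} = {i}"
  show "ys = flip xs i"
  proof (rule nth_equalityI)
    fix j assume "j < length ys"
    then have "j \<in> {j. j < length xs \<and> xs ! j \<noteq> ys ! j} \<longleftrightarrow> j = i" using diff assms by auto
    then show "ys ! j = flip xs i ! j" using assms \<open>j < length ys\<close> by (auto simp: nth_flip)
  qed (use assms in simp)
qed (use assms in \<open>auto simp: nth_flip\<close>)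

lemma hypercube_nbhd:
  assumes "length xs = d"
  shows "nbhd (hypercube_vertices d) hypercube_adj xs = flip xs ` {..<d}"
proof (intro set_eqI iffI)
  fix ys assume "ys \<in> nbhd (hypercube_vertices d) hypercube_adj xs"
  then have len: "length ys = d" and "card {j. j < length xs \<and> xs ! j \<noteq> ys ! j} = 1"
    unfolding nbhd_def hypercube_vertices_def hypercube_adj_def by auto
  then obtain i where diff: "{j. j < length xs \<and> xs ! j \<noteq> ys ! j} = {i}"
    by (auto simp: card_Suc_eq)
  then have "i < d" using assms by blast
  then show "ys \<in> flip xs ` {..<d}"
    using diff differs_exactly_at_iff[of ys xs i] len assms by auto
next
  fix ys assume "ys \<in> flip xs ` {..<d}"
  then obtain i where "i < d" "ys = flip xs i" by auto
  then show "ys \<in> nbhd (hypercube_vertices d) hypercube_adj xs"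
    using differs_exactly_at_iff[of ys xs i] assms
    by (simp add: nbhd_def hypercube_vertices_def hypercube_adj_def)
qed

lemma sum_hypercube_nbhd:
  assumes "length xs = d"
  shows "(\<Sum>y\<in>nbhd (hypercube_vertices d) hypercube_adj xs. g y) = (\<Sum>i<d. g (flip xs i))"
  using hypercube_nbhd[OF assms] sum.reindex[OF inj_flip[of xs], of g] assms by simp

lemma hypercube_regular:
  "xs \<in> hypercube_vertices d \<Longrightarrow> card (nbhd (hypercube_vertices d) hypercube_adj xs) = d"
  using hypercube_nbhd[of xs d] card_image[OF inj_flip[of xs]]
  by (simp add: hypercube_vertices_def)

lemma hypercube_adj_sym: "hypercube_adj xs ys = hypercube_adj ys xs"
proof -
  have "length xs = length ys \<Longrightarrow>
      {i. i < length xs \<and> xs ! i \<noteq> ys ! i} = {i. i < length ys \<and> ys ! i \<noteq> xs ! i}"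
    by auto
  then show ?thesis unfolding hypercube_adj_def by metis
qed

(* The number denoted by a bit string, least significant bit first. *)
fun val :: "bool list \<Rightarrow> nat" where
  "val [] = 0"
| "val (b # bs) = (if b then 1 else 0) + 2 * val bs"

lemma val_less: "val xs < 2 ^ length xs"
  by (induction xs) auto

lemma val_inj: "length xs = length ys \<Longrightarrow> val xs = val ys \<Longrightarrow> xs = ys"
proof (induction xs arbitrary: ys)
  case (Cons a as)
  then obtain b bs where ys: "ys = b # bs" by (cases ys) auto
  have "val (a # as) mod 2 = val (b # bs) mod 2" using Cons.prems ys by simp
  then have "a = b" by (cases a; cases b; simp; presburger)
  then show ?case using Cons ys by auto
qed simp

lemma card_hypercube_vertices: "card (hypercube_vertices d) = 2 ^ d"
  using card_lists_length_eq[of "UNIV::bool set" d] by (simp add: hypercube_vertices_def)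

lemma bij_val: "bij_betw val (hypercube_vertices d) {0..<2^d}"
proof -
  have inj: "inj_on val (hypercube_vertices d)"
    by (auto intro!: inj_onI val_inj simp: hypercube_vertices_def)
  moreover have "val ` hypercube_vertices d \<subseteq> {0..<2^d}"
    using val_less by (auto simp: hypercube_vertices_def)
  ultimately have "val ` hypercube_vertices d = {0..<2^d}"
    using card_image[OF inj] card_hypercube_vertices by (intro card_subset_eq) auto
  then show ?thesis using inj by (simp add: bij_betw_def)
qed

(* Summing over all one-bit flips: each bit is flipped once and kept d-1
   times, giving an affine expression in val xs. *)
lemma sum_val_flips:
  "(\<Sum>i<length xs. int (val (flip xs i))) = (int (length xs) - 2) * int (val xs) + 2 ^ length xs - 1"
proof (induction xs)
  case (Cons a as)
  have "(\<Sum>i<length (a # as). int (val (flip (a # as) i)))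
       = int (val (flip (a # as) 0)) + (\<Sum>i<length as. (if a then 1 else 0) + 2 * int (val (flip as i)))"
    by (simp only: length_Cons sum.lessThan_Suc_shift) (simp add: flip_def)
  also have "\<dots> = int (val (flip (a # as) 0))
      + int (length as) * (if a then 1 else 0) + 2 * (\<Sum>i<length as. int (val (flip as i)))"
    by (simp add: sum.distrib sum_distrib_left)
  finally show ?case using Cons.IH by (simp add: flip_def algebra_simps)
qed simp

lemma hypercube_val_weight:
  "xs \<in> hypercube_vertices d \<Longrightarrow>
   int (\<Sum>y\<in>nbhd (hypercube_vertices d) hypercube_adj xs. val y) = (int d - 2) * int (val xs) + (2 ^ d - 1)"
  using sum_hypercube_nbhd[of xs d val] sum_val_flips[of xs]
  by (simp add: hypercube_vertices_def)

theorem mainTheorem4: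
  fixes d :: nat
  assumes "d \<ge> 1"
  shows "Zm_distance_antimagic (2 ^ d) (hypercube_vertices d) hypercube_adj \<longleftrightarrow> odd d"
proof
  assume antimagic: "Zm_distance_antimagic (2 ^ d) (hypercube_vertices d) hypercube_adj"
  show "odd d"
  proof
    assume "even d"
    then show False
      using even_regular_not_antimagic[OF hypercube_adj_sym hypercube_regular, of d "2 ^ d"]
        antimagic assms by simp
  qed
next
  assume "odd d"
  then have "coprime (int d - 2) (int (2 ^ d))"
    by (simp add: coprime_power_right_iff coprime_commute[of _ 2] coprime_left_2_iff_odd)
  then have "Zm_distance_antimagic_labelling (2 ^ d) (hypercube_vertices d) hypercube_adj val"
    using affine_weights_antimagic[OF bij_val] hypercube_val_weight by blast
  then show "Zm_distance_antimagic (2 ^ d) (hypercube_vertices d) hypercube_adj"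
    by (auto simp: Zm_distance_antimagic_def)
qed

end
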